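(* Let $(A_n)_{n\in\mathbb{N}}\subset\mathbb{N}$ satisfy $\lim_{n\to\infty}n^{-1}\log A_n=a$ for some $a>0$. Then for every $T>0$ and every sequence $(k_n)_{n\in\mathbb{N}}\subset\mathbb{N}_0$, $$\lim_{n\to\infty}\sup_{0\le t\le T}\Big|\frac1n\log^+\Big(\sum_{i=1}^{A_n}X_{i,k_n}([nt])\Big)-(a+t\log\mu)^+\Big|=0\quad\text{a.s.}$$
   Context: $(X_{i,k})_{i\in\mathbb{N},k\in\mathbb{N}_0}$ are i.i.d. Galton–Watson processes $X_{i,k}=(X_{i,k}(n))_{n\in\mathbb{N}_0}$ with $X_{i,k}(0)=1$ and offspring mean $\mu\in(0,\infty)$. $\log^+x=\max(\log x,0)$, $x^+=\max(x,0)$, $[\cdot]$ is the integer part. *)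

theory Defs
  imports "HOL-Probability.Probability"
begin

text \<open>Positive part of the natural logarithm: log^+ x = max (log x) 0
  (note ln 0 = 0 in Isabelle, so log^+ 0 = 0).\<close>
definition logplus :: "real \<Rightarrow> real" where
  "logplus x = max (ln x) 0"

end

theory Submission
  imports Defs "HOL-Real_Asymp.Real_Asymp"
begin

text \<open>
  Fix \<epsilon> > 0 and write Z(m) for the total size of generation m of the A(n) processes.
  Since E Z(m) = A(n) \<mu>^m, Markov's inequality gives Z(m) < A(n) \<mu>^m e^(\<epsilon>n) for all m \<le> nT
  outside an event of probability O(n e^(-\<epsilon>n)). Conversely, once Z(m) \<ge> e^(\<epsilon>n), generation m + 1
  is a sum of at least e^(\<epsilon>n) fresh i.i.d. offspring counts, so Hoeffding's inequality (applied to
  the counts truncated at a suitable level K) gives Z(m + 1) \<ge> \<mu> e^(-\<epsilon>) Z(m) outside an event of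
  the same order. By Borel--Cantelli both bounds hold almost surely for all large n, and an
  elementary argument then pins log^+ Z([nt]) / n to within (T + 3) \<epsilon> of (a + t log \<mu>)^+,
  uniformly in t \<in> [0, T].
\<close>

section \<open>Deterministic profile estimates\<close>

lemma geometric_growth_above_threshold:
  fixes Z :: "nat \<Rightarrow> real" and c r :: real
  assumes "0 \<le> r"
    and step: "\<And>j. j < m \<Longrightarrow> c \<le> Z j \<Longrightarrow> r * Z j \<le> Z (Suc j)"
    and above: "\<And>j. j < m \<Longrightarrow> c \<le> Z 0 * r ^ j"
  shows "Z 0 * r ^ m \<le> Z m"
  using step above
proof (induction m)
  case (Suc m)
  then have IH: "Z 0 * r ^ m \<le> Z m"
    by simp
  with Suc.prems(2)[of m] have "c \<le> Z m"
    by simp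
  with Suc.prems(1)[of m] have "r * Z m \<le> Z (Suc m)"
    by simp
  moreover have "Z 0 * r ^ Suc m \<le> r * Z m"
    using IH \<open>0 \<le> r\<close> by (simp add: mult_left_mono algebra_simps)
  ultimately show ?case
    by linarith
qed simp

lemma logplus_nonneg: "0 \<le> logplus x"
  by (simp add: logplus_def)

lemma ln_le_logplus: "ln x \<le> logplus x"
  by (simp add: logplus_def)

lemma logplus_upper_profile:
  fixes z A \<mu> a t \<epsilon> :: real and n m :: nat
  assumes "0 < n" "0 < A" "0 < \<mu>" "0 \<le> \<epsilon>" "0 \<le> z"
    and "ln A \<le> n * (a + \<epsilon>)" and "m * ln \<mu> \<le> n * (t * ln \<mu> + \<epsilon>)"
    and "z < A * \<mu> ^ m * exp (\<epsilon> * n)"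
  shows "logplus z \<le> n * (max (a + t * ln \<mu>) 0 + 3 * \<epsilon>)"
proof (cases "z > 0")
  case True
  have "ln z < ln (A * \<mu> ^ m * exp (\<epsilon> * n))"
    using True assms by (subst ln_less_cancel_iff) auto
  also have "\<dots> = ln A + m * ln \<mu> + \<epsilon> * n"
    using assms by (simp add: ln_mult ln_realpow)
  also have "\<dots> \<le> n * (a + t * ln \<mu> + 3 * \<epsilon>)"
    using assms(6,7) by (simp add: algebra_simps)
  also have "\<dots> \<le> n * (max (a + t * ln \<mu>) 0 + 3 * \<epsilon>)"
    by (intro mult_left_mono) auto
  finally show ?thesis
    using assms by (simp add: logplus_def)
next
  case False
  with \<open>0 \<le> z\<close> have "z = 0"
    by simp
  then show ?thesis
    using assms by (simp add: logplus_def)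
qed

text \<open>Above the threshold e^(\<epsilon>n) the path grows at least like Z(0) r^j with r = \<mu> e^(-\<epsilon>).
  Since ln (Z(0) r^j) is affine in j and large at both j = 0 and j = m, the comparison path itself
  never falls below the threshold.\<close>

lemma logplus_lower_profile:
  fixes Z :: "nat \<Rightarrow> real" and \<mu> a t T \<epsilon> :: real and n m :: nat
  assumes "0 < n" "0 < \<mu>" "0 < \<epsilon>" "0 \<le> T" "(T + 3) * \<epsilon> \<le> a"
    and "0 < Z 0" "n * (a - \<epsilon>) \<le> ln (Z 0)"
    and "n * (t * ln \<mu> - \<epsilon>) \<le> m * ln \<mu>" "m \<le> n * T"
    and step: "\<And>j. j < m \<Longrightarrow> exp (\<epsilon> * n) \<le> Z j \<Longrightarrow> \<mu> * exp (- \<epsilon>) * Z j \<le> Z (Suc j)"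
  shows "n * (max (a + t * ln \<mu>) 0 - (T + 3) * \<epsilon>) \<le> logplus (Z m)"
proof (cases "a + t * ln \<mu> \<le> (T + 3) * \<epsilon>")
  case True
  then have "n * (max (a + t * ln \<mu>) 0 - (T + 3) * \<epsilon>) \<le> 0"
    using assms by (intro mult_nonneg_nonpos) auto
  then show ?thesis
    using logplus_nonneg order_trans by blast
next
  case False
  define r where "r = \<mu> * exp (- \<epsilon>)"
  define f where "f j = ln (Z 0) + j * (ln \<mu> - \<epsilon>)" for j :: nat
  have ln_path: "ln (Z 0 * r ^ j) = f j" for j
    using assms by (simp add: r_def f_def ln_mult ln_realpow)
  have "real m * \<epsilon> \<le> n * T * \<epsilon>"
    using assms by (intro mult_right_mono) auto
  then have f_m: "n * (a + t * ln \<mu> - (T + 2) * \<epsilon>) \<le> f m"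
    using assms(7,8) by (simp add: f_def algebra_simps)
  have above: "exp (\<epsilon> * n) \<le> Z 0 * r ^ j" if "j < m" for j
  proof -
    have "\<epsilon> * n \<le> f j"
    proof (cases "ln \<mu> - \<epsilon> \<ge> 0")
      case True
      have "0 \<le> T * \<epsilon>"
        using assms by simp
      then have "n * \<epsilon> \<le> n * (a - \<epsilon>)"
        using assms(3,5) by (intro mult_left_mono) (auto simp: algebra_simps)
      also have "\<dots> \<le> f j"
        using True assms(7) by (simp add: f_def add_increasing2)
      finally show ?thesis
        by (simp add: mult.commute)
    next
      case False
      have "n * \<epsilon> \<le> n * (a + t * ln \<mu> - (T + 2) * \<epsilon>)"
        using \<open>\<not> a + t * ln \<mu> \<le> (T + 3) * \<epsilon>\<close> by (intro mult_left_mono) (auto simp: algebra_simps)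
      also have "\<dots> \<le> f m"
        by (rule f_m)
      also have "\<dots> \<le> f j"
        using False \<open>j < m\<close> by (simp add: f_def mult_right_mono_neg)
      finally show ?thesis
        by (simp add: mult.commute)
    qed
    then show ?thesis
      using assms ln_path[of j] by (metis exp_le_cancel_iff exp_ln mult_pos_pos r_def exp_gt_zero zero_less_power)
  qed
  have "0 < Z 0 * r ^ m"
    using assms by (simp add: r_def)
  have "Z 0 * r ^ m \<le> Z m"
    by (rule geometric_growth_above_threshold[where c = "exp (\<epsilon> * n)"])
      (use assms above in \<open>auto simp: r_def\<close>)
  have "0 \<le> (T + 3) * \<epsilon>"
    using assms by simp
  then have "n * (max (a + t * ln \<mu>) 0 - (T + 3) * \<epsilon>) \<le> n * (a + t * ln \<mu> - (T + 2) * \<epsilon>)"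
    using False assms(3) by (intro mult_left_mono) (auto simp: algebra_simps)
  also have "\<dots> \<le> ln (Z 0 * r ^ m)"
    using f_m ln_path by simp
  also have "\<dots> \<le> ln (Z m)"
    using \<open>0 < Z 0 * r ^ m\<close> \<open>Z 0 * r ^ m \<le> Z m\<close> by (subst ln_le_cancel_iff) auto
  also have "\<dots> \<le> logplus (Z m)"
    by (rule ln_le_logplus)
  finally show ?thesis .
qed

lemma logplus_profile_error:
  fixes Z :: "nat \<Rightarrow> real" and \<mu> a t T \<epsilon> :: real and n :: nat
  assumes "0 < n" "0 < \<mu>" "0 < \<epsilon>" "0 \<le> t" "t \<le> T" "(T + 3) * \<epsilon> \<le> a"
    and "\<And>j. 0 \<le> Z j" "0 < Z 0"
    and "\<bar>ln (Z 0) / n - a\<bar> \<le> \<epsilon>" "\<bar>ln \<mu>\<bar> / n \<le> \<epsilon>"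
    and up: "\<And>j. j \<le> nat \<lfloor>n * T\<rfloor> \<Longrightarrow> Z j < Z 0 * \<mu> ^ j * exp (\<epsilon> * n)"
    and lo: "\<And>j. j < nat \<lfloor>n * T\<rfloor> \<Longrightarrow> exp (\<epsilon> * n) \<le> Z j \<Longrightarrow> \<mu> * exp (- \<epsilon>) * Z j \<le> Z (Suc j)"
  shows "\<bar>logplus (Z (nat \<lfloor>n * t\<rfloor>)) / n - max (a + t * ln \<mu>) 0\<bar> \<le> (T + 3) * \<epsilon>"
proof -
  define m where "m = nat \<lfloor>n * t\<rfloor>"
  have "0 \<le> n * t" "n * t \<le> n * T"
    using assms by (auto intro: mult_left_mono)
  then have m_le: "real m \<le> n * t" "n * t < real m + 1" "real m \<le> n * T" and "m \<le> nat \<lfloor>n * T\<rfloor>"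
    unfolding m_def by (linarith, linarith, linarith, intro nat_mono floor_mono)
  have "\<bar>real m * ln \<mu> - n * t * ln \<mu>\<bar> = \<bar>real m - n * t\<bar> * \<bar>ln \<mu>\<bar>"
    by (simp add: left_diff_distrib[symmetric] abs_mult)
  also have "\<dots> \<le> \<bar>ln \<mu>\<bar>"
    using m_le by (intro mult_left_le_one_le) auto
  also have "\<dots> \<le> n * \<epsilon>"
    using assms by (simp add: field_simps)
  finally have m_ln: "\<bar>real m * ln \<mu> - n * t * ln \<mu>\<bar> \<le> n * \<epsilon>" .
  have ln_Z0: "n * (a - \<epsilon>) \<le> ln (Z 0)" "ln (Z 0) \<le> n * (a + \<epsilon>)"
    using assms by (simp_all add: abs_le_iff field_simps)
  have "logplus (Z m) \<le> n * (max (a + t * ln \<mu>) 0 + 3 * \<epsilon>)"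
    by (rule logplus_upper_profile[where A = "Z 0"])
      (use assms m_ln ln_Z0 up[OF \<open>m \<le> _\<close>] in \<open>auto simp: abs_le_iff algebra_simps\<close>)
  moreover have "n * (max (a + t * ln \<mu>) 0 - (T + 3) * \<epsilon>) \<le> logplus (Z m)"
    by (rule logplus_lower_profile)
      (use assms m_ln ln_Z0 m_le \<open>m \<le> _\<close> in \<open>auto simp: abs_le_iff algebra_simps\<close>)
  ultimately have "logplus (Z m) / n \<le> max (a + t * ln \<mu>) 0 + 3 * \<epsilon>"
    "max (a + t * ln \<mu>) 0 - (T + 3) * \<epsilon> \<le> logplus (Z m) / n"
    using assms by (simp_all add: pos_divide_le_eq pos_le_divide_eq mult.commute)
  moreover have "3 * \<epsilon> \<le> (T + 3) * \<epsilon>"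
    using assms by simp
  ultimately show ?thesis
    unfolding m_def by (simp add: abs_le_iff)
qed

lemma summable_linear_times_exp_neg:
  fixes \<epsilon> T :: real
  assumes "\<epsilon> > 0"
  shows "summable (\<lambda>n::nat. (real n * T + 1) * exp (- \<epsilon> * n))"
proof (rule summable_comparison_test_bigo)
  show "summable (\<lambda>n. norm (exp (- \<epsilon> / 2) ^ n))"
    using assms by simp
  show "(\<lambda>n. (real n * T + 1) * exp (- \<epsilon> * n)) \<in> O(\<lambda>n. exp (- \<epsilon> / 2) ^ n)"
    using assms by (simp add: exp_of_nat_mult[symmetric]) real_asymp
qed

lemma exp_neg_le_inverse:
  fixes y :: real
  assumes "y > 0"
  shows "exp (- y) \<le> 1 / y"
proof -
  have "y \<le> exp y"
    using exp_ge_add_one_self[of y] by linarith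
  then show ?thesis
    using assms by (simp add: exp_minus field_simps)
qed

lemma nn_integral_split_nat:
  fixes Y :: "'a \<Rightarrow> nat" and h :: "nat \<Rightarrow> 'a \<Rightarrow> ennreal"
  assumes Y: "Y \<in> measurable M (count_space UNIV)" and h: "\<And>N. h N \<in> borel_measurable M"
  shows "(\<integral>\<^sup>+\<omega>. h (Y \<omega>) \<omega> \<partial>M) = (\<Sum>N. \<integral>\<^sup>+\<omega>. indicator {\<omega>\<in>space M. Y \<omega> = N} \<omega> * h N \<omega> \<partial>M)"
proof -
  have level_sets: "{\<omega>\<in>space M. Y \<omega> = N} \<in> sets M" for N
    using measurable_sets[OF Y, of "{N}"] by (simp add: vimage_def Int_def conj_commute)
  have "h (Y \<omega>) \<omega> = (\<Sum>N. indicator {\<omega>\<in>space M. Y \<omega> = N} \<omega> * h N \<omega>)" if "\<omega> \<in> space M" for \<omega>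
  proof -
    have "(\<lambda>N. indicator {\<omega>\<in>space M. Y \<omega> = N} \<omega> * h N \<omega>) = (\<lambda>N. if N = Y \<omega> then h (Y \<omega>) \<omega> else 0)"
      using that by (auto simp: indicator_def)
    then show ?thesis
      using sums_single[of "Y \<omega>" "\<lambda>_. h (Y \<omega>) \<omega>"] by (simp add: sums_iff)
  qed
  then have "(\<integral>\<^sup>+\<omega>. h (Y \<omega>) \<omega> \<partial>M) = (\<integral>\<^sup>+\<omega>. (\<Sum>N. indicator {\<omega>\<in>space M. Y \<omega> = N} \<omega> * h N \<omega>) \<partial>M)"
    by (rule nn_integral_cong)
  also have "\<dots> = (\<Sum>N. \<integral>\<^sup>+\<omega>. indicator {\<omega>\<in>space M. Y \<omega> = N} \<omega> * h N \<omega> \<partial>M)"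
    by (rule nn_integral_suminf) (use level_sets h in auto)
  finally show ?thesis .
qed

lemma nn_integral_indicator_times_nat:
  fixes g :: "'a \<Rightarrow> nat"
  assumes g: "g \<in> measurable M (count_space UNIV)" and "E \<in> sets M"
  shows "(\<integral>\<^sup>+\<omega>. indicator E \<omega> * of_nat (g \<omega>) \<partial>M)
    = (\<Sum>N. of_nat N * emeasure M (E \<inter> {\<omega>\<in>space M. g \<omega> = N}))"
proof -
  have "{\<omega>\<in>space M. g \<omega> = N} \<in> sets M" for N
    using measurable_sets[OF g, of "{N}"] by (simp add: vimage_def Int_def conj_commute)
  then have "(\<integral>\<^sup>+\<omega>. indicator {\<omega>\<in>space M. g \<omega> = N} \<omega> * (indicator E \<omega> * of_nat N) \<partial>M)
      = of_nat N * emeasure M (E \<inter> {\<omega>\<in>space M. g \<omega> = N})" for N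
    using \<open>E \<in> sets M\<close> by (simp add: nn_integral_cmult_indicator indicator_inter_arith[symmetric] ac_simps)
  moreover have "(\<integral>\<^sup>+\<omega>. indicator E \<omega> * of_nat (g \<omega>) \<partial>M)
      = (\<Sum>N. \<integral>\<^sup>+\<omega>. indicator {\<omega>\<in>space M. g \<omega> = N} \<omega> * (indicator E \<omega> * of_nat N) \<partial>M)"
    using nn_integral_split_nat[OF g, of "\<lambda>N \<omega>. indicator E \<omega> * of_nat N"] \<open>E \<in> sets M\<close> by simp
  ultimately show ?thesis
    by simp
qed

lemma (in prob_space) prob_UN_indep_le:
  fixes E B :: "'v \<Rightarrow> 'a set"
  assumes "countable S" and E: "\<And>v. v \<in> S \<Longrightarrow> E v \<in> events" and B: "\<And>v. v \<in> S \<Longrightarrow> B v \<in> events"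
    and disj: "disjoint_family_on E S"
    and indep: "\<And>v. v \<in> S \<Longrightarrow> prob (E v \<inter> B v) = prob (E v) * prob (B v)"
    and bound: "\<And>v. v \<in> S \<Longrightarrow> prob (B v) \<le> \<beta>" and "0 \<le> \<beta>"
  shows "prob (\<Union>v\<in>S. E v \<inter> B v) \<le> \<beta>"
proof -
  have "disjoint_family_on (\<lambda>v. E v \<inter> B v) S"
    using disj unfolding disjoint_family_on_def by blast
  then have "emeasure M (\<Union>v\<in>S. E v \<inter> B v) = (\<integral>\<^sup>+v. emeasure M (E v \<inter> B v) \<partial>count_space S)"
    by (intro emeasure_UN_countable) (use assms in auto)
  also have "\<dots> \<le> (\<integral>\<^sup>+v. ennreal \<beta> * emeasure M (E v) \<partial>count_space S)"
  proof (rule nn_integral_mono)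
    fix v assume "v \<in> space (count_space S)"
    then have "prob (E v \<inter> B v) \<le> \<beta> * prob (E v)"
      using indep[of v] bound[of v] by (simp add: mult_right_mono mult.commute)
    then show "emeasure M (E v \<inter> B v) \<le> ennreal \<beta> * emeasure M (E v)"
      by (simp add: emeasure_eq_measure ennreal_mult[symmetric] \<open>0 \<le> \<beta>\<close>)
  qed
  also have "\<dots> = ennreal \<beta> * emeasure M (\<Union>v\<in>S. E v)"
    by (simp add: nn_integral_cmult emeasure_UN_countable assms)
  also have "\<dots> \<le> ennreal \<beta>"
    using E by (simp add: emeasure_eq_measure mult_left_le)
  finally show ?thesis
    using \<open>0 \<le> \<beta>\<close> by (simp add: emeasure_eq_measure)
qed

lemma (in prob_space) AE_eventually_notin_if_prob_le:
  fixes B :: "nat \<Rightarrow> 'a set" and \<epsilon> T c :: real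
  assumes "\<And>n. B n \<in> events" "0 < \<epsilon>"
    and "\<And>n. prob (B n) \<le> c * ((real n * T + 1) * exp (- \<epsilon> * n))"
  shows "AE \<omega> in M. eventually (\<lambda>n. \<omega> \<notin> B n) sequentially"
proof -
  have "summable (\<lambda>n. prob (B n))"
    by (rule summable_comparison_test'[OF summable_mult[OF summable_linear_times_exp_neg]])
      (use assms in auto)
  with borel_cantelli_AE1[of B] assms(1)
  have "AE \<omega> in M. eventually (\<lambda>n. \<omega> \<in> space M - B n) sequentially"
    by (simp add: emeasure_eq_measure)
  then show ?thesis
    by (rule eventually_mono) (auto elim: eventually_mono)
qed

lemma SUP_tendsto_0_if_eventually_le:
  fixes f :: "nat \<Rightarrow> 'a \<Rightarrow> real"
  assumes "S \<noteq> {}" "\<And>n t. 0 \<le> f n t"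
    and small: "\<And>e. 0 < e \<Longrightarrow> eventually (\<lambda>n. \<forall>t\<in>S. f n t \<le> e) sequentially"
  shows "(\<lambda>n. SUP t\<in>S. f n t) \<longlonglongrightarrow> 0"
proof (rule LIMSEQ_I)
  fix e :: real
  assume "0 < e"
  then have "eventually (\<lambda>n. \<forall>t\<in>S. f n t \<le> e / 2) sequentially"
    by (intro small) simp
  then have "eventually (\<lambda>n. norm ((SUP t\<in>S. f n t) - 0) < e) sequentially"
  proof (rule eventually_mono)
    fix n
    assume le: "\<forall>t\<in>S. f n t \<le> e / 2"
    have "(SUP t\<in>S. f n t) \<le> e / 2"
      using le \<open>S \<noteq> {}\<close> by (intro cSUP_least) auto
    moreover have "0 \<le> (SUP t\<in>S. f n t)"
      using le \<open>S \<noteq> {}\<close> assms(2) by (metis bdd_aboveI2 cSUP_upper2 ex_in_conv)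
    ultimately show "norm ((SUP t\<in>S. f n t) - 0) < e"
      using \<open>0 < e\<close> by simp
  qed
  then show "\<exists>no. \<forall>n\<ge>no. norm ((SUP t\<in>S. f n t) - 0) < e"
    by (simp add: eventually_sequentially)
qed

section \<open>Arrays of Galton--Watson processes\<close>

text \<open>\<xi> i k n j is the number of children of individual j of generation n of the process X i k.\<close>

locale galton_watson_array = prob_space M for M :: "'w measure" +
  fixes p :: "nat pmf" and \<mu> :: real
    and \<xi> :: "nat \<Rightarrow> nat \<Rightarrow> nat \<Rightarrow> nat \<Rightarrow> 'w \<Rightarrow> nat"
    and X :: "nat \<Rightarrow> nat \<Rightarrow> nat \<Rightarrow> 'w \<Rightarrow> nat"
  assumes offspring_integrable: "integrable (measure_pmf p) real"
    and offspring_mean: "measure_pmf.expectation p real = \<mu>" and mean_pos: "0 < \<mu>"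
    and indep_offspring: "indep_vars (\<lambda>_. count_space UNIV) (\<lambda>(i, k, n, j). \<xi> i k n j) UNIV"
    and distr_offspring: "\<And>i k n j. distr M (count_space UNIV) (\<xi> i k n j) = measure_pmf p"
    and X_0: "\<And>i k \<omega>. X i k 0 \<omega> = 1"
    and X_Suc: "\<And>i k n \<omega>. X i k (Suc n) \<omega> = (\<Sum>j<X i k n \<omega>. \<xi> i k n j \<omega>)"
begin

definition offspring :: "nat \<times> nat \<times> nat \<times> nat \<Rightarrow> 'w \<Rightarrow> nat" where
  "offspring = (\<lambda>(i, k, n, j). \<xi> i k n j)"

definition offspring_events :: "nat set \<Rightarrow> 'w set set" where
  "offspring_events L =
    (\<Union>\<iota>\<in>UNIV \<times> UNIV \<times> L \<times> UNIV. {offspring \<iota> -` A \<inter> space M | A. A \<in> sets (count_space UNIV)})"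

definition generations :: "nat set \<Rightarrow> 'w measure" where
  "generations L = sigma (space M) (offspring_events L)"

lemma offspring_events_subset: "offspring_events L \<subseteq> Pow (space M)"
  by (auto simp: offspring_events_def)

lemma sets_generations: "sets (generations L) = sigma_sets (space M) (offspring_events L)"
  unfolding generations_def by (rule sets_measure_of[OF offspring_events_subset])

lemma space_generations: "space (generations L) = space M"
  unfolding generations_def by (rule space_measure_of[OF offspring_events_subset])

lemma \<xi>_measurable[measurable]: "\<xi> i k n j \<in> measurable M (count_space UNIV)"
  using indep_offspring unfolding indep_vars_def by (auto dest: bspec[of _ _ "(i, k, n, j)"])

lemma offspring_measurable[measurable]: "offspring \<iota> \<in> measurable M (count_space UNIV)"
  by (cases \<iota>) (simp add: offspring_def)

lemma subalgebra_generations: "subalgebra M (generations L)"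
proof -
  have "sigma_sets (space M) (offspring_events L) \<subseteq> events"
    by (rule sets.sigma_sets_subset) (auto simp: offspring_events_def)
  then show ?thesis
    by (simp add: subalgebra_def sets_generations space_generations)
qed

lemma sets_generations_subset: "sets (generations L) \<subseteq> events"
  using subalgebra_generations by (simp add: subalgebra_def)

lemma offspring_measurable_generations:
  assumes "l \<in> L"
  shows "\<xi> i k l j \<in> measurable (generations L) (count_space UNIV)"
proof (rule measurableI)
  fix A :: "nat set"
  have "offspring (i, k, l, j) -` A \<inter> space M \<in> offspring_events L"
    using assms unfolding offspring_events_def by (intro UN_I[of "(i, k, l, j)"]) auto
  then show "\<xi> i k l j -` A \<inter> space (generations L) \<in> sets (generations L)"
    by (simp add: sets_generations space_generations offspring_def)
qed (simp add: space_generations)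

lemma X_measurable_generations:
  assumes "{..<m} \<subseteq> L"
  shows "X i k m \<in> measurable (generations L) (count_space UNIV)"
  using assms
proof (induction m)
  case (Suc m)
  have [measurable]: "\<xi> i k m j \<in> measurable (generations L) (count_space UNIV)" for j
    using Suc.prems by (intro offspring_measurable_generations) auto
  have [measurable]: "X i k m \<in> measurable (generations L) (count_space UNIV)"
    using Suc by (meson lessThan_subset_iff order_trans le_SucI order_refl)
  show ?case
    unfolding X_Suc[abs_def] by measurable
qed (simp add: X_0[abs_def])

lemma X_measurable[measurable]: "X i k m \<in> measurable M (count_space UNIV)"
  using measurable_from_subalg[OF subalgebra_generations X_measurable_generations[of m UNIV]]
  by simp

lemma indep_generations:
  assumes "L1 \<inter> L2 = {}" "E \<in> sets (generations L1)" "B \<in> sets (generations L2)"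
  shows "prob (E \<inter> B) = prob E * prob B"
proof -
  let ?E = "\<lambda>\<iota>. {offspring \<iota> -` A \<inter> space M | A. A \<in> sets (count_space UNIV)}"
  let ?I = "\<lambda>b. if b then UNIV \<times> UNIV \<times> L1 \<times> UNIV else UNIV \<times> UNIV \<times> L2 \<times> (UNIV :: nat set)"
  have "indep_sets ?E UNIV"
    using indep_offspring unfolding indep_vars_def2 offspring_def by simp
  then have "indep_sets (\<lambda>b. sigma_sets (space M) (\<Union>\<iota>\<in>?I b. ?E \<iota>)) UNIV"
  proof (intro indep_sets_collect_sigma)
    show "Int_stable (?E \<iota>)" for \<iota>
      unfolding Int_stable_def by clarify (rule_tac x = "A \<inter> Aa" in exI, auto)
    show "disjoint_family_on ?I UNIV"
      using assms(1) unfolding disjoint_family_on_def by auto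
  qed (auto intro: indep_sets_mono_index)
  moreover have "(\<lambda>b. sigma_sets (space M) (\<Union>\<iota>\<in>?I b. ?E \<iota>))
      = case_bool (sets (generations L1)) (sets (generations L2))"
    by (rule ext) (simp add: sets_generations offspring_events_def split: bool.split)
  ultimately have "indep_set (sets (generations L1)) (sets (generations L2))"
    unfolding indep_set_def by simp
  then show ?thesis
    using indep_setD assms by blast
qed

lemma nn_integral_indicator_times_indep:
  fixes f :: "'w \<Rightarrow> nat"
  assumes "L1 \<inter> L2 = {}" and E: "E \<in> sets (generations L1)"
    and f: "f \<in> measurable (generations L2) (count_space UNIV)"
  shows "(\<integral>\<^sup>+\<omega>. indicator E \<omega> * of_nat (f \<omega>) \<partial>M) = emeasure M E * (\<integral>\<^sup>+\<omega>. of_nat (f \<omega>) \<partial>M)"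
proof -
  have fM: "f \<in> measurable M (count_space UNIV)"
    using measurable_from_subalg[OF subalgebra_generations f] .
  have "E \<in> events"
    using E sets_generations_subset by auto
  have level_set: "{\<omega>\<in>space M. f \<omega> = x} \<in> sets (generations L2)" for x
    using measurable_sets[OF f, of "{x}"] by (simp add: space_generations vimage_def Int_def conj_commute)
  have "(\<integral>\<^sup>+\<omega>. indicator E \<omega> * of_nat (f \<omega>) \<partial>M)
      = (\<Sum>x. of_nat x * emeasure M (E \<inter> {\<omega>\<in>space M. f \<omega> = x}))"
    by (rule nn_integral_indicator_times_nat[OF fM \<open>E \<in> events\<close>])
  also have "\<dots> = (\<Sum>x. emeasure M E * (of_nat x * emeasure M (space M \<inter> {\<omega>\<in>space M. f \<omega> = x})))"
  proof (rule suminf_cong)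
    fix x
    have "prob (E \<inter> {\<omega>\<in>space M. f \<omega> = x}) = prob E * prob {\<omega>\<in>space M. f \<omega> = x}"
      by (rule indep_generations[OF assms(1) E level_set])
    moreover have "space M \<inter> {\<omega>\<in>space M. f \<omega> = x} = {\<omega>\<in>space M. f \<omega> = x}"
      by blast
    ultimately show "of_nat x * emeasure M (E \<inter> {\<omega>\<in>space M. f \<omega> = x})
        = emeasure M E * (of_nat x * emeasure M (space M \<inter> {\<omega>\<in>space M. f \<omega> = x}))"
      by (simp add: emeasure_eq_measure ennreal_mult mult.left_commute)
  qed
  also have "\<dots> = emeasure M E * (\<integral>\<^sup>+\<omega>. indicator (space M) \<omega> * of_nat (f \<omega>) \<partial>M)"
    by (simp add: ennreal_suminf_cmult nn_integral_indicator_times_nat[OF fM])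
  also have "(\<integral>\<^sup>+\<omega>. indicator (space M) \<omega> * of_nat (f \<omega>) \<partial>M) = (\<integral>\<^sup>+\<omega>. of_nat (f \<omega>) \<partial>M)"
    by (rule nn_integral_cong) simp
  finally show ?thesis .
qed

lemma nn_integral_offspring: "(\<integral>\<^sup>+\<omega>. of_nat (\<xi> i k m j \<omega>) \<partial>M) = ennreal \<mu>"
proof -
  have "(\<integral>\<^sup>+\<omega>. of_nat (\<xi> i k m j \<omega>) \<partial>M)
      = (\<integral>\<^sup>+x. of_nat x \<partial>distr M (count_space UNIV) (\<xi> i k m j))"
    by (rule nn_integral_distr[symmetric]) auto
  also have "\<dots> = (\<integral>\<^sup>+x. ennreal (real x) \<partial>measure_pmf p)"
    by (simp add: distr_offspring ennreal_of_nat_eq_real_of_nat)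
  also have "\<dots> = ennreal \<mu>"
    using offspring_mean by (subst nn_integral_eq_integral[OF offspring_integrable]) auto
  finally show ?thesis .
qed

lemma nn_integral_X: "(\<integral>\<^sup>+\<omega>. of_nat (X i k m \<omega>) \<partial>M) = ennreal (\<mu> ^ m)"
proof (induction m)
  case 0
  then show ?case
    by (simp add: X_0 emeasure_space_1)
next
  case (Suc m)
  let ?E = "\<lambda>N. {\<omega>\<in>space M. X i k m \<omega> = N}"
  have E_gen: "?E N \<in> sets (generations {..<m})" for N
    using measurable_sets[OF X_measurable_generations[of m "{..<m}" i k], of "{N}"]
    by (simp add: space_generations vimage_def Int_def conj_commute)
  have [measurable]: "\<xi> i k m j \<in> measurable (generations {m}) (count_space UNIV)" for j
    by (rule offspring_measurable_generations) simp
  have next_gen: "(\<lambda>\<omega>. \<Sum>j<N. \<xi> i k m j \<omega>) \<in> measurable (generations {m}) (count_space UNIV)" for N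
    by measurable
  have "(\<integral>\<^sup>+\<omega>. of_nat (X i k (Suc m) \<omega>) \<partial>M)
      = (\<integral>\<^sup>+\<omega>. (\<lambda>N \<omega>. of_nat (\<Sum>j<N. \<xi> i k m j \<omega>)) (X i k m \<omega>) \<omega> \<partial>M)"
    by (simp add: X_Suc)
  also have "\<dots> = (\<Sum>N. \<integral>\<^sup>+\<omega>. indicator (?E N) \<omega> * of_nat (\<Sum>j<N. \<xi> i k m j \<omega>) \<partial>M)"
    by (rule nn_integral_split_nat) auto
  also have "\<dots> = (\<Sum>N. emeasure M (?E N) * (of_nat N * ennreal \<mu>))"
  proof (rule suminf_cong)
    fix N
    have "(\<integral>\<^sup>+\<omega>. of_nat (\<Sum>j<N. \<xi> i k m j \<omega>) \<partial>M) = (\<Sum>j<N. \<integral>\<^sup>+\<omega>. of_nat (\<xi> i k m j \<omega>) \<partial>M)"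
      by (subst of_nat_sum, rule nn_integral_sum) auto
    then have "(\<integral>\<^sup>+\<omega>. of_nat (\<Sum>j<N. \<xi> i k m j \<omega>) \<partial>M) = of_nat N * ennreal \<mu>"
      by (simp add: nn_integral_offspring)
    moreover have "{..<m} \<inter> {m} = {}"
      by auto
    ultimately show "(\<integral>\<^sup>+\<omega>. indicator (?E N) \<omega> * of_nat (\<Sum>j<N. \<xi> i k m j \<omega>) \<partial>M)
        = emeasure M (?E N) * (of_nat N * ennreal \<mu>)"
      using nn_integral_indicator_times_indep[OF _ E_gen next_gen] by simp
  qed
  also have "\<dots> = (\<Sum>N. ennreal \<mu> * (of_nat N * emeasure M (space M \<inter> ?E N)))"
    by (intro suminf_cong) (simp add: Int_absorb1 ac_simps)
  also have "\<dots> = ennreal \<mu> * (\<Sum>N. of_nat N * emeasure M (space M \<inter> ?E N))"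
    by (rule ennreal_suminf_cmult)
  also have "(\<Sum>N. of_nat N * emeasure M (space M \<inter> ?E N))
      = (\<integral>\<^sup>+\<omega>. indicator (space M) \<omega> * of_nat (X i k m \<omega>) \<partial>M)"
    by (rule nn_integral_indicator_times_nat[symmetric]) auto
  also have "\<dots> = (\<integral>\<^sup>+\<omega>. of_nat (X i k m \<omega>) \<partial>M)"
    by (rule nn_integral_cong) simp
  also have "ennreal \<mu> * \<dots> = ennreal (\<mu> ^ Suc m)"
    using Suc.IH mean_pos by (simp add: ennreal_mult)
  finally show ?case .
qed

lemma prob_sum_X_ge:
  assumes "finite S" "0 < c"
  shows "prob {\<omega>\<in>space M. c \<le> real (\<Sum>i\<in>S. X i k m \<omega>)} \<le> real (card S) * \<mu> ^ m / c"
proof -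
  have "(\<integral>\<^sup>+\<omega>. of_nat (\<Sum>i\<in>S. X i k m \<omega>) \<partial>M) = (\<Sum>i\<in>S. \<integral>\<^sup>+\<omega>. of_nat (X i k m \<omega>) \<partial>M)"
    by (simp add: nn_integral_sum)
  also have "\<dots> = of_nat (card S) * ennreal (\<mu> ^ m)"
    by (simp only: nn_integral_X) simp
  also have "\<dots> = ennreal (real (card S) * \<mu> ^ m)"
    using mean_pos by (simp add: ennreal_mult ennreal_of_nat_eq_real_of_nat)
  finally have mean: "(\<integral>\<^sup>+\<omega>. of_nat (\<Sum>i\<in>S. X i k m \<omega>) \<partial>M) = ennreal (real (card S) * \<mu> ^ m)" .
  have "c \<le> real N \<longleftrightarrow> 1 \<le> ennreal (1 / c) * of_nat N" for N :: nat
    using \<open>0 < c\<close>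
    by (simp add: ennreal_of_nat_eq_real_of_nat ennreal_mult[symmetric] ennreal_le_iff2 field_simps)
  then have "{\<omega>\<in>space M. c \<le> real (\<Sum>i\<in>S. X i k m \<omega>)}
      = {\<omega>\<in>space M. 1 \<le> ennreal (1 / c) * of_nat (\<Sum>i\<in>S. X i k m \<omega>)}"
    by blast
  then have "emeasure M {\<omega>\<in>space M. c \<le> real (\<Sum>i\<in>S. X i k m \<omega>)}
      \<le> ennreal (1 / c) * (\<integral>\<^sup>+\<omega>. of_nat (\<Sum>i\<in>S. X i k m \<omega>) * indicator (space M) \<omega> \<partial>M)"
    using nn_integral_Markov_inequality[of "\<lambda>\<omega>. of_nat (\<Sum>i\<in>S. X i k m \<omega>)" "space M" M "ennreal (1 / c)"]
    by simp
  also have "(\<integral>\<^sup>+\<omega>. of_nat (\<Sum>i\<in>S. X i k m \<omega>) * indicator (space M) \<omega> \<partial>M)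
      = ennreal (real (card S) * \<mu> ^ m)"
    by (subst mean[symmetric], rule nn_integral_cong) simp
  also have "ennreal (1 / c) * ennreal (real (card S) * \<mu> ^ m) = ennreal (real (card S) * \<mu> ^ m / c)"
    using \<open>0 < c\<close> mean_pos by (simp add: ennreal_mult[symmetric])
  finally show ?thesis
    using mean_pos \<open>0 < c\<close> by (simp add: emeasure_eq_measure ennreal_le_iff)
qed

text \<open>Truncation makes the offspring counts bounded, as Hoeffding's inequality requires.\<close>

definition truncated_mean :: "nat \<Rightarrow> real" where
  "truncated_mean K = measure_pmf.expectation p (\<lambda>x. real (min x K))"

lemma truncated_mean_gt:
  assumes "r < \<mu>"
  shows "\<exists>K>0. r < truncated_mean K"
proof -
  have "(\<lambda>K. real (min x K)) \<longlonglongrightarrow> real x" for x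
    by (rule tendsto_eventually, rule eventually_mono[OF eventually_ge_at_top[of x]]) simp
  then have "AE x in measure_pmf p. (\<lambda>K. real (min x K)) \<longlonglongrightarrow> real x"
    by simp
  moreover have "AE x in measure_pmf p. norm (real (min x K)) \<le> real x" for K
    by simp
  ultimately have "truncated_mean \<longlonglongrightarrow> \<mu>"
    unfolding truncated_mean_def offspring_mean[symmetric]
    by (intro integral_dominated_convergence[OF _ _ offspring_integrable]) simp_all
  then have "eventually (\<lambda>K. r < truncated_mean K) sequentially"
    using assms by (rule order_tendstoD)
  then have "eventually (\<lambda>K. r < truncated_mean K \<and> 0 < K) sequentially"
    by (rule eventually_conj) (rule eventually_gt_at_top)
  then show ?thesis
    using eventually_happens'[OF trivial_limit_sequentially] by blast
qed

lemma prob_sum_offspring_less: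
  assumes "finite I" "I \<noteq> {}" "0 < K" "r \<le> truncated_mean K"
  shows "prob {\<omega>\<in>space M. real (\<Sum>\<iota>\<in>I. offspring \<iota> \<omega>) < r * card I}
    \<le> exp (- (2 * (truncated_mean K - r)\<^sup>2 / (real K)\<^sup>2) * card I)"
proof -
  define g :: "nat \<Rightarrow> real" where "g x = real (min x K)" for x
  define Y where "Y \<iota> \<omega> = g (offspring \<iota> \<omega>)" for \<iota> \<omega>
  have distr_Y: "distr M borel (Y \<iota>) = distr (measure_pmf p) borel g" for \<iota>
  proof -
    have "distr M borel (Y \<iota>) = distr (distr M (count_space UNIV) (offspring \<iota>)) borel g"
      unfolding Y_def by (subst distr_distr) (auto simp: o_def)
    then show ?thesis
      by (cases \<iota>) (simp add: offspring_def distr_offspring)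
  qed
  have [measurable]: "Y \<iota> \<in> borel_measurable M" for \<iota>
    unfolding Y_def g_def by measurable
  let ?Y0 = "Y (0, 0, 0, 0)"
  have mean_Y: "expectation ?Y0 = truncated_mean K"
  proof -
    have "expectation ?Y0 = integral\<^sup>L (distr M borel ?Y0) (\<lambda>x. x)"
      by (rule integral_distr[symmetric]) (auto simp: Y_def g_def)
    also have "\<dots> = truncated_mean K"
      unfolding distr_Y truncated_mean_def g_def by (subst integral_distr) auto
    finally show ?thesis .
  qed
  interpret Hoeffding_ineq_iid M I Y ?Y0 0 "real K" "expectation ?Y0"
  proof unfold_locales
    have "indep_vars (\<lambda>_. count_space UNIV) offspring I"
      using indep_vars_subset[OF indep_offspring[folded offspring_def]] by simp
    then show "indep_vars (\<lambda>_. borel) Y I"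
      unfolding Y_def by (rule indep_vars_compose2) (simp add: g_def)
    show "distr M borel (Y \<iota>) = distr M borel ?Y0" for \<iota>
      by (simp only: distr_Y)
  qed (auto simp: Y_def g_def \<open>finite I\<close>)
  have "{\<omega>\<in>space M. real (\<Sum>\<iota>\<in>I. offspring \<iota> \<omega>) < r * card I}
      \<subseteq> {\<omega>\<in>space M. (\<Sum>\<iota>\<in>I. Y \<iota> \<omega>) \<le> card I * expectation ?Y0 - card I * (truncated_mean K - r)}"
  proof safe
    fix \<omega>
    assume "real (\<Sum>\<iota>\<in>I. offspring \<iota> \<omega>) < r * card I"
    moreover have "(\<Sum>\<iota>\<in>I. Y \<iota> \<omega>) \<le> real (\<Sum>\<iota>\<in>I. offspring \<iota> \<omega>)"
      unfolding of_nat_sum by (rule sum_mono) (simp add: Y_def g_def)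
    ultimately show "(\<Sum>\<iota>\<in>I. Y \<iota> \<omega>) \<le> card I * expectation ?Y0 - card I * (truncated_mean K - r)"
      by (simp add: mean_Y algebra_simps)
  qed
  then have "prob {\<omega>\<in>space M. real (\<Sum>\<iota>\<in>I. offspring \<iota> \<omega>) < r * card I}
      \<le> prob {\<omega>\<in>space M. (\<Sum>\<iota>\<in>I. Y \<iota> \<omega>) \<le> card I * expectation ?Y0 - card I * (truncated_mean K - r)}"
    by (intro finite_measure_mono) (auto simp: Y_def g_def)
  also have "\<dots> \<le> exp (- 2 * (card I * (truncated_mean K - r))\<^sup>2 / (card I * (real K - 0)\<^sup>2))"
    using assms by (intro Hoeffding_ineq_le) auto
  also have "\<dots> = exp (- (2 * (truncated_mean K - r)\<^sup>2 / (real K)\<^sup>2) * card I)"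
    using assms by (simp add: power2_eq_square card_gt_0_iff field_simps)
  finally show ?thesis .
qed

text \<open>The indices of the offspring counts making up generation m + 1 of the processes X i k,
  i \<in> S, when generation m of X i k has size v i.\<close>

definition offspring_block :: "nat set \<Rightarrow> nat \<Rightarrow> nat \<Rightarrow> (nat \<Rightarrow> nat) \<Rightarrow> (nat \<times> nat \<times> nat \<times> nat) set" where
  "offspring_block S k m v = (\<lambda>(i, j). (i, k, m, j)) ` (SIGMA i:S. {..<v i})"

lemma inj_on_offspring_index: "inj_on (\<lambda>(i, j). (i, k, m, j :: nat)) A"
  by (auto simp: inj_on_def)

lemma finite_offspring_block: "finite S \<Longrightarrow> finite (offspring_block S k m v)"
  by (simp add: offspring_block_def)

lemma card_offspring_block: "finite S \<Longrightarrow> card (offspring_block S k m v) = (\<Sum>i\<in>S. v i)"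
  by (simp add: offspring_block_def card_image[OF inj_on_offspring_index] card_SigmaI)

lemma sum_offspring_block:
  assumes "finite S" "\<And>i. i \<in> S \<Longrightarrow> X i k m \<omega> = v i"
  shows "(\<Sum>\<iota>\<in>offspring_block S k m v. offspring \<iota> \<omega>) = (\<Sum>i\<in>S. X i k (Suc m) \<omega>)"
proof -
  have "(\<Sum>\<iota>\<in>offspring_block S k m v. offspring \<iota> \<omega>) = (\<Sum>(i, j)\<in>(SIGMA i:S. {..<v i}). \<xi> i k m j \<omega>)"
    unfolding offspring_block_def
    by (subst sum.reindex[OF inj_on_offspring_index]) (auto simp: offspring_def intro: sum.cong)
  also have "\<dots> = (\<Sum>i\<in>S. X i k (Suc m) \<omega>)"
    using assms by (simp add: sum.Sigma[symmetric] X_Suc)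
  finally show ?thesis .
qed

lemma shortfall_event_eq_UN:
  fixes N0 r :: real
  assumes "finite S"
  shows "{\<omega>\<in>space M. N0 \<le> real (\<Sum>i\<in>S. X i k m \<omega>) \<and>
      real (\<Sum>i\<in>S. X i k (Suc m) \<omega>) < r * real (\<Sum>i\<in>S. X i k m \<omega>)}
    = (\<Union>v\<in>{v \<in> S \<rightarrow>\<^sub>E UNIV. N0 \<le> real (\<Sum>i\<in>S. v i)}.
        {\<omega>\<in>space M. \<forall>i\<in>S. X i k m \<omega> = v i} \<inter>
        {\<omega>\<in>space M. real (\<Sum>\<iota>\<in>offspring_block S k m v. offspring \<iota> \<omega>) < r * card (offspring_block S k m v)})"
    (is "_ = (\<Union>v\<in>?V. ?E v \<inter> ?B v)")
proof (intro equalityI subsetI)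
  fix \<omega>
  assume "\<omega> \<in> {\<omega>\<in>space M. N0 \<le> real (\<Sum>i\<in>S. X i k m \<omega>) \<and>
    real (\<Sum>i\<in>S. X i k (Suc m) \<omega>) < r * real (\<Sum>i\<in>S. X i k m \<omega>)}"
  then have \<omega>: "\<omega> \<in> space M" "N0 \<le> real (\<Sum>i\<in>S. X i k m \<omega>)"
    "real (\<Sum>i\<in>S. X i k (Suc m) \<omega>) < r * real (\<Sum>i\<in>S. X i k m \<omega>)"
    by auto
  define v where "v = restrict (\<lambda>i. X i k m \<omega>) S"
  have X_v: "\<And>i. i \<in> S \<Longrightarrow> X i k m \<omega> = v i"
    by (simp add: v_def)
  then have sum_v: "(\<Sum>i\<in>S. v i) = (\<Sum>i\<in>S. X i k m \<omega>)"
    by simp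
  have "v \<in> ?V"
    using \<omega>(2) sum_v by (simp add: v_def)
  moreover have "\<omega> \<in> ?E v"
    using \<omega>(1) X_v by simp
  moreover have "\<omega> \<in> ?B v"
    using \<omega>(1,3) sum_v
    by (simp add: sum_offspring_block[OF \<open>finite S\<close> X_v] card_offspring_block[OF \<open>finite S\<close>]
        del: of_nat_sum)
  ultimately show "\<omega> \<in> (\<Union>v\<in>?V. ?E v \<inter> ?B v)"
    by blast
next
  fix \<omega>
  assume "\<omega> \<in> (\<Union>v\<in>?V. ?E v \<inter> ?B v)"
  then obtain v where "v \<in> ?V" "\<omega> \<in> ?E v" "\<omega> \<in> ?B v"
    by blast
  then have X_v: "\<And>i. i \<in> S \<Longrightarrow> X i k m \<omega> = v i" and "\<omega> \<in> space M"
    by auto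
  then have sum_v: "(\<Sum>i\<in>S. v i) = (\<Sum>i\<in>S. X i k m \<omega>)"
    by simp
  show "\<omega> \<in> {\<omega>\<in>space M. N0 \<le> real (\<Sum>i\<in>S. X i k m \<omega>) \<and>
    real (\<Sum>i\<in>S. X i k (Suc m) \<omega>) < r * real (\<Sum>i\<in>S. X i k m \<omega>)}"
    using \<open>v \<in> ?V\<close> \<open>\<omega> \<in> ?B v\<close> \<open>\<omega> \<in> space M\<close> sum_v
    by (simp add: sum_offspring_block[OF \<open>finite S\<close> X_v] card_offspring_block[OF \<open>finite S\<close>]
        del: of_nat_sum)
qed

text \<open>Given the values v of generation m, the next generation is a sum of \<open>\<Sum>v\<close> offspring counts
  that are independent of generation m; hence the bound \<beta> for such sums carries over.\<close>

lemma prob_sum_X_Suc_less: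
  fixes r N0 \<beta> :: real
  assumes "finite S" "0 < N0" "0 \<le> \<beta>"
    and sum_bound: "\<And>I. finite I \<Longrightarrow> I \<noteq> {} \<Longrightarrow> N0 \<le> card I \<Longrightarrow>
      prob {\<omega>\<in>space M. real (\<Sum>\<iota>\<in>I. offspring \<iota> \<omega>) < r * card I} \<le> \<beta>"
  shows "prob {\<omega>\<in>space M. N0 \<le> real (\<Sum>i\<in>S. X i k m \<omega>) \<and>
      real (\<Sum>i\<in>S. X i k (Suc m) \<omega>) < r * real (\<Sum>i\<in>S. X i k m \<omega>)} \<le> \<beta>"
proof -
  define V where "V = {v \<in> S \<rightarrow>\<^sub>E UNIV. N0 \<le> real (\<Sum>i\<in>S. v i)}"
  define E where "E v = {\<omega>\<in>space M. \<forall>i\<in>S. X i k m \<omega> = v i}" for v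
  define B where "B v = {\<omega>\<in>space M. real (\<Sum>\<iota>\<in>offspring_block S k m v. offspring \<iota> \<omega>)
    < r * card (offspring_block S k m v)}" for v
  have decompose: "{\<omega>\<in>space M. N0 \<le> real (\<Sum>i\<in>S. X i k m \<omega>) \<and>
      real (\<Sum>i\<in>S. X i k (Suc m) \<omega>) < r * real (\<Sum>i\<in>S. X i k m \<omega>)} = (\<Union>v\<in>V. E v \<inter> B v)"
    unfolding V_def E_def B_def by (rule shortfall_event_eq_UN[OF \<open>finite S\<close>])
  have E_gen: "E v \<in> sets (generations {..<m})" for v
  proof -
    have [measurable]: "X i k m \<in> measurable (generations {..<m}) (count_space UNIV)" for i
      by (rule X_measurable_generations) simp
    have "{\<omega>\<in>space (generations {..<m}). \<forall>i\<in>S. X i k m \<omega> = v i} \<in> sets (generations {..<m})"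
      using \<open>finite S\<close> by measurable
    then show ?thesis
      by (simp add: E_def space_generations)
  qed
  have B_gen: "B v \<in> sets (generations {m})" for v
  proof -
    have [measurable]: "offspring \<iota> \<in> measurable (generations {m}) (count_space UNIV)"
      if "\<iota> \<in> offspring_block S k m v" for \<iota>
      using that by (auto simp: offspring_block_def offspring_def intro: offspring_measurable_generations)
    have "(\<lambda>\<omega>. \<Sum>\<iota>\<in>offspring_block S k m v. offspring \<iota> \<omega>) \<in> measurable (generations {m}) (count_space UNIV)"
      by measurable
    from measurable_sets[OF this, of "{N. real N < r * card (offspring_block S k m v)}"]
    show ?thesis
      by (simp add: B_def space_generations vimage_def Int_def conj_commute)
  qed
  have events: "E v \<in> events" "B v \<in> events" for v
    using subsetD[OF sets_generations_subset E_gen] subsetD[OF sets_generations_subset B_gen] .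
  have "prob (\<Union>v\<in>V. E v \<inter> B v) \<le> \<beta>"
  proof (rule prob_UN_indep_le)
    show "countable V"
      unfolding V_def by (rule countable_subset[OF _ countable_PiE[OF \<open>finite S\<close>]]) auto
    show "disjoint_family_on E V"
      unfolding disjoint_family_on_def E_def V_def by (auto, metis PiE_ext)
    show "prob (E v \<inter> B v) = prob (E v) * prob (B v)" for v
      by (rule indep_generations[OF _ E_gen B_gen]) auto
    show "prob (B v) \<le> \<beta>" if "v \<in> V" for v
    proof -
      have "N0 \<le> card (offspring_block S k m v)"
        using that \<open>finite S\<close> by (simp add: V_def card_offspring_block)
      then have "offspring_block S k m v \<noteq> {}"
        using \<open>0 < N0\<close> by auto
      then show ?thesis
        unfolding B_def using \<open>N0 \<le> _\<close> \<open>finite S\<close> by (intro sum_bound finite_offspring_block)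
    qed
  qed (use events \<open>0 \<le> \<beta>\<close> in auto)
  then show ?thesis
    unfolding decompose .
qed

lemma AE_eventually_sum_X_below_envelope:
  fixes A k :: "nat \<Rightarrow> nat" and T \<epsilon> :: real
  assumes A_pos: "\<And>n. 1 \<le> n \<Longrightarrow> 1 \<le> A n" and "0 \<le> T" "0 < \<epsilon>"
  shows "AE \<omega> in M. eventually (\<lambda>n. \<forall>m\<le>nat \<lfloor>n * T\<rfloor>.
    real (\<Sum>i=1..A n. X i (k n) m \<omega>) < real (A n) * \<mu> ^ m * exp (\<epsilon> * n)) sequentially"
proof -
  define C where "C n m = {\<omega>\<in>space M.
    real (A n) * \<mu> ^ m * exp (\<epsilon> * n) \<le> real (\<Sum>i=1..A n. X i (k n) m \<omega>)}" for n m
  define B where "B n = (if 1 \<le> n then \<Union>m\<le>nat \<lfloor>n * T\<rfloor>. C n m else {})" for n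
  have C_events: "C n m \<in> events" for n m
    unfolding C_def by measurable
  then have B_events: "B n \<in> events" for n
    by (simp add: B_def)
  have "prob (B n) \<le> 1 * ((real n * T + 1) * exp (- \<epsilon> * n))" for n
  proof (cases "1 \<le> n")
    case True
    have "prob (B n) \<le> (\<Sum>m\<le>nat \<lfloor>n * T\<rfloor>. prob (C n m))"
      using True C_events by (simp add: B_def finite_measure_subadditive_finite image_subset_iff)
    also have "\<dots> \<le> (\<Sum>m\<le>nat \<lfloor>n * T\<rfloor>. exp (- \<epsilon> * n))"
    proof (rule sum_mono)
      fix m
      have "0 < real (A n) * \<mu> ^ m * exp (\<epsilon> * n)"
        using A_pos[OF True] mean_pos by simp
      then have "prob (C n m) \<le> real (card {1..A n}) * \<mu> ^ m / (real (A n) * \<mu> ^ m * exp (\<epsilon> * n))"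
        unfolding C_def by (intro prob_sum_X_ge) auto
      also have "\<dots> = exp (- \<epsilon> * n)"
        using A_pos[OF True] mean_pos by (simp add: exp_minus field_simps)
      finally show "prob (C n m) \<le> exp (- \<epsilon> * n)" .
    qed
    also have "\<dots> \<le> 1 * ((real n * T + 1) * exp (- \<epsilon> * n))"
      using \<open>0 \<le> T\<close> by (simp add: mult_right_mono of_nat_floor)
    finally show ?thesis .
  qed (simp add: B_def)
  then have "AE \<omega> in M. eventually (\<lambda>n. \<omega> \<notin> B n) sequentially"
    using B_events \<open>0 < \<epsilon>\<close> by (intro AE_eventually_notin_if_prob_le)
  then show ?thesis
  proof (rule AE_mp[OF _ AE_I2], intro impI)
    fix \<omega>
    assume "\<omega> \<in> space M" "eventually (\<lambda>n. \<omega> \<notin> B n) sequentially"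
    then have "eventually (\<lambda>n. \<omega> \<notin> B n \<and> 1 \<le> n) sequentially"
      by (intro eventually_conj eventually_ge_at_top)
    then show "eventually (\<lambda>n. \<forall>m\<le>nat \<lfloor>n * T\<rfloor>.
      real (\<Sum>i=1..A n. X i (k n) m \<omega>) < real (A n) * \<mu> ^ m * exp (\<epsilon> * n)) sequentially"
      by (rule eventually_mono) (use \<open>\<omega> \<in> space M\<close> in \<open>auto simp: B_def C_def not_le\<close>)
  qed
qed

lemma AE_eventually_sum_X_geometric_steps:
  fixes A k :: "nat \<Rightarrow> nat" and T \<epsilon> :: real
  assumes "0 \<le> T" "0 < \<epsilon>"
  shows "AE \<omega> in M. eventually (\<lambda>n. \<forall>m<nat \<lfloor>n * T\<rfloor>.
    exp (\<epsilon> * n) \<le> real (\<Sum>i=1..A n. X i (k n) m \<omega>) \<longrightarrow>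
    \<mu> * exp (- \<epsilon>) * real (\<Sum>i=1..A n. X i (k n) m \<omega>) \<le> real (\<Sum>i=1..A n. X i (k n) (Suc m) \<omega>))
    sequentially"
proof -
  define r where "r = \<mu> * exp (- \<epsilon>)"
  have "r < \<mu>"
    using mean_pos \<open>0 < \<epsilon>\<close> by (simp add: r_def)
  then obtain K where "0 < K" "r < truncated_mean K"
    using truncated_mean_gt by blast
  define \<gamma> where "\<gamma> = 2 * (truncated_mean K - r)\<^sup>2 / (real K)\<^sup>2"
  have "0 < \<gamma>"
    using \<open>0 < K\<close> \<open>r < truncated_mean K\<close> by (simp add: \<gamma>_def)
  define C where "C n m = {\<omega>\<in>space M. exp (\<epsilon> * n) \<le> real (\<Sum>i=1..A n. X i (k n) m \<omega>) \<and>
    real (\<Sum>i=1..A n. X i (k n) (Suc m) \<omega>) < r * real (\<Sum>i=1..A n. X i (k n) m \<omega>)}" for n m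
  define B where "B n = (\<Union>m<nat \<lfloor>n * T\<rfloor>. C n m)" for n
  have C_events: "C n m \<in> events" for n m
    unfolding C_def by measurable
  then have B_events: "B n \<in> events" for n
    by (simp add: B_def)
  have "prob (B n) \<le> (1 / \<gamma>) * ((real n * T + 1) * exp (- \<epsilon> * n))" for n
  proof -
    have "prob (B n) \<le> (\<Sum>m<nat \<lfloor>n * T\<rfloor>. prob (C n m))"
      using C_events by (simp add: B_def finite_measure_subadditive_finite image_subset_iff)
    also have "\<dots> \<le> (\<Sum>m<nat \<lfloor>n * T\<rfloor>. exp (- \<epsilon> * n) / \<gamma>)"
    proof (rule sum_mono)
      fix m
      show "prob (C n m) \<le> exp (- \<epsilon> * n) / \<gamma>"
        unfolding C_def
      proof (rule prob_sum_X_Suc_less)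
        fix I :: "(nat \<times> nat \<times> nat \<times> nat) set"
        assume I: "finite I" "I \<noteq> {}" "exp (\<epsilon> * n) \<le> card I"
        have "prob {\<omega>\<in>space M. real (\<Sum>\<iota>\<in>I. offspring \<iota> \<omega>) < r * card I} \<le> exp (- (\<gamma> * card I))"
          using prob_sum_offspring_less[OF I(1,2) \<open>0 < K\<close>] \<open>r < truncated_mean K\<close> by (simp add: \<gamma>_def)
        also have "\<dots> \<le> 1 / (\<gamma> * card I)"
          using \<open>0 < \<gamma>\<close> I by (intro exp_neg_le_inverse) (simp add: card_gt_0_iff)
        also have "\<dots> \<le> 1 / (\<gamma> * exp (\<epsilon> * n))"
          using \<open>0 < \<gamma>\<close> I by (intro divide_left_mono mult_left_mono mult_pos_pos) (auto simp: card_gt_0_iff)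
        also have "\<dots> = exp (- \<epsilon> * n) / \<gamma>"
          by (simp add: exp_minus field_simps)
        finally show "prob {\<omega>\<in>space M. real (\<Sum>\<iota>\<in>I. offspring \<iota> \<omega>) < r * card I} \<le> exp (- \<epsilon> * n) / \<gamma>" .
      qed (use \<open>0 < \<gamma>\<close> in auto)
    qed
    also have "\<dots> = (1 / \<gamma>) * (real (nat \<lfloor>n * T\<rfloor>) * exp (- \<epsilon> * n))"
      by simp
    also have "\<dots> \<le> (1 / \<gamma>) * ((real n * T + 1) * exp (- \<epsilon> * n))"
    proof -
      have "real (nat \<lfloor>n * T\<rfloor>) \<le> n * T"
        using \<open>0 \<le> T\<close> by (intro of_nat_floor) simp
      then show ?thesis
        using \<open>0 < \<gamma>\<close> by (intro mult_left_mono mult_right_mono) simp_all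
    qed
    finally show ?thesis .
  qed
  then have "AE \<omega> in M. eventually (\<lambda>n. \<omega> \<notin> B n) sequentially"
    using B_events \<open>0 < \<epsilon>\<close> by (intro AE_eventually_notin_if_prob_le)
  then show ?thesis
    by (rule AE_mp[OF _ AE_I2]) (auto simp: B_def C_def r_def not_less elim!: eventually_mono)
qed

lemma AE_eventually_profile_error_le:
  fixes A k :: "nat \<Rightarrow> nat" and a T \<delta> :: real
  assumes A_pos: "\<And>n. 1 \<le> n \<Longrightarrow> 1 \<le> A n"
    and A_lim: "(\<lambda>n. ln (real (A n)) / real n) \<longlonglongrightarrow> a"
    and "0 < T" "0 < \<delta>" "\<delta> \<le> a"
  shows "AE \<omega> in M. eventually (\<lambda>n. \<forall>t\<in>{0..T}.
    \<bar>logplus (real (\<Sum>i=1..A n. X i (k n) (nat \<lfloor>real n * t\<rfloor>) \<omega>)) / real n - max (a + t * ln \<mu>) 0\<bar> \<le> \<delta>)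
    sequentially"
proof -
  define \<epsilon> where "\<epsilon> = \<delta> / (T + 3)"
  have "0 < \<epsilon>" "(T + 3) * \<epsilon> = \<delta>"
    using \<open>0 < T\<close> \<open>0 < \<delta>\<close> by (simp_all add: \<epsilon>_def)
  have "eventually (\<lambda>n. dist (ln (real (A n)) / real n) a < \<epsilon>) sequentially"
    using A_lim \<open>0 < \<epsilon>\<close> by (rule tendstoD)
  moreover have "eventually (\<lambda>n. dist (\<bar>ln \<mu>\<bar> / real n) 0 < \<epsilon>) sequentially"
    using lim_const_over_n \<open>0 < \<epsilon>\<close> by (rule tendstoD)
  moreover have "eventually (\<lambda>n. 1 \<le> n) sequentially"
    by (rule eventually_ge_at_top)
  ultimately have large_n: "eventually (\<lambda>n. \<bar>ln (real (A n)) / n - a\<bar> \<le> \<epsilon> \<and> \<bar>ln \<mu>\<bar> / n \<le> \<epsilon> \<and> 1 \<le> n)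
      sequentially"
    by eventually_elim (auto simp: dist_real_def)
  have "AE \<omega> in M. eventually (\<lambda>n. \<forall>m\<le>nat \<lfloor>n * T\<rfloor>.
      real (\<Sum>i=1..A n. X i (k n) m \<omega>) < real (A n) * \<mu> ^ m * exp (\<epsilon> * n)) sequentially"
    using A_pos \<open>0 < T\<close> \<open>0 < \<epsilon>\<close> by (intro AE_eventually_sum_X_below_envelope) auto
  moreover have "AE \<omega> in M. eventually (\<lambda>n. \<forall>m<nat \<lfloor>n * T\<rfloor>.
      exp (\<epsilon> * n) \<le> real (\<Sum>i=1..A n. X i (k n) m \<omega>) \<longrightarrow>
      \<mu> * exp (- \<epsilon>) * real (\<Sum>i=1..A n. X i (k n) m \<omega>) \<le> real (\<Sum>i=1..A n. X i (k n) (Suc m) \<omega>))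
      sequentially"
    using \<open>0 < T\<close> \<open>0 < \<epsilon>\<close> by (intro AE_eventually_sum_X_geometric_steps) auto
  ultimately show ?thesis
  proof eventually_elim
    case (elim \<omega>)
    with large_n show ?case
    proof eventually_elim
      case (elim n)
      show ?case
      proof
        fix t
        assume "t \<in> {0..T}"
        have "\<bar>logplus (real (\<Sum>i=1..A n. X i (k n) (nat \<lfloor>real n * t\<rfloor>) \<omega>)) / real n
            - max (a + t * ln \<mu>) 0\<bar> \<le> (T + 3) * \<epsilon>"
          by (rule logplus_profile_error[where Z = "\<lambda>m. real (\<Sum>i=1..A n. X i (k n) m \<omega>)"])
            (use elim \<open>t \<in> {0..T}\<close> \<open>0 < \<epsilon>\<close> mean_pos \<open>(T + 3) * \<epsilon> = \<delta>\<close> \<open>\<delta> \<le> a\<close> A_pos[of n] in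
              \<open>auto simp: X_0 sum_nonneg\<close>)
        then show "\<bar>logplus (real (\<Sum>i=1..A n. X i (k n) (nat \<lfloor>real n * t\<rfloor>) \<omega>)) / real n
            - max (a + t * ln \<mu>) 0\<bar> \<le> \<delta>"
          using \<open>(T + 3) * \<epsilon> = \<delta>\<close> by simp
      qed
    qed
  qed
qed

end

theorem lemma3:
  fixes M :: "'w measure"
    and p :: "nat pmf"
    and \<mu> :: real
    and \<xi> :: "nat \<Rightarrow> nat \<Rightarrow> nat \<Rightarrow> nat \<Rightarrow> 'w \<Rightarrow> nat"
    and X :: "nat \<Rightarrow> nat \<Rightarrow> nat \<Rightarrow> 'w \<Rightarrow> nat"
    and A :: "nat \<Rightarrow> nat"
    and a T :: real
    and k :: "nat \<Rightarrow> nat"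
  assumes M: "prob_space M"
    and offspring_mean: "integrable (measure_pmf p) real"
      "measure_pmf.expectation p real = \<mu>" "0 < \<mu>"
    and indep: "prob_space.indep_vars M (\<lambda>_. count_space UNIV)
                  (\<lambda>(i, k, n, j). \<xi> i k n j) UNIV"
    and distr: "\<And>i k n j. distr M (count_space UNIV) (\<xi> i k n j) = measure_pmf p"
    and X0: "\<And>i k \<omega>. X i k 0 \<omega> = 1"
    and XSuc: "\<And>i k n \<omega>. X i k (Suc n) \<omega> = (\<Sum>j<X i k n \<omega>. \<xi> i k n j \<omega>)"
    and A_pos: "\<And>n. n \<ge> 1 \<Longrightarrow> A n \<ge> 1"
    and A_lim: "(\<lambda>n. ln (real (A n)) / real n) \<longlonglongrightarrow> a"
    and a_pos: "0 < a"
    and T_pos: "0 < T"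
  shows "AE \<omega> in M.
    (\<lambda>n. SUP t\<in>{0..T}.
        \<bar>logplus (real (\<Sum>i=1..A n. X i (k n) (nat \<lfloor>real n * t\<rfloor>) \<omega>)) / real n
          - max (a + t * ln \<mu>) 0\<bar>) \<longlonglongrightarrow> 0"
proof -
  interpret galton_watson_array M p \<mu> \<xi> X
    by (rule galton_watson_array.intro[OF M], unfold_locales)
      (use offspring_mean indep distr X0 XSuc in auto)
  let ?err = "\<lambda>\<omega> n t. \<bar>logplus (real (\<Sum>i=1..A n. X i (k n) (nat \<lfloor>real n * t\<rfloor>) \<omega>)) / real n
    - max (a + t * ln \<mu>) 0\<bar>"
  have "AE \<omega> in M. \<forall>q::nat. eventually (\<lambda>n. \<forall>t\<in>{0..T}. ?err \<omega> n t \<le> a / (q + 1)) sequentially"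
    unfolding AE_all_countable using a_pos T_pos
    by (intro allI AE_eventually_profile_error_le[OF A_pos A_lim]) (auto simp: field_simps)
  then show ?thesis
  proof (rule AE_mp[OF _ AE_I2], intro impI)
    fix \<omega>
    assume small: "\<forall>q::nat. eventually (\<lambda>n. \<forall>t\<in>{0..T}. ?err \<omega> n t \<le> a / (q + 1)) sequentially"
    show "(\<lambda>n. SUP t\<in>{0..T}. ?err \<omega> n t) \<longlonglongrightarrow> 0"
    proof (rule SUP_tendsto_0_if_eventually_le)
      fix e :: real
      assume "0 < e"
      then obtain q :: nat where "a / e < q"
        using reals_Archimedean2 by blast
      then have "a / (real q + 1) \<le> e"
        using \<open>0 < e\<close> a_pos by (simp add: field_simps)
      with small[rule_format, of q] show "eventually (\<lambda>n. \<forall>t\<in>{0..T}. ?err \<omega> n t \<le> e) sequentially"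
        by (elim eventually_mono) (meson order_trans)
    qed (use T_pos in auto)
  qed
qed

end
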